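(* Let $\mathcal{L}=(\mathrm{Fm},\vdash)$ be a selfextensional logic, $N\subseteq\mathrm{Fm}\times\mathrm{Fm}$ a normative system and $P\subseteq P_N$. Then $S^1(P,N)$ is closed under $(\top)$, (SI), (WO), $(\mathrm{AND})^{\downarrow}$; $S^2(P,N)$ is closed under $(\top)$, (SI), (WO), $(\mathrm{AND})^{\downarrow}$, $(\mathrm{OR})^{\downarrow}$; and $S^3(P,N)$ is closed under $(\top)$, (SI), (WO), $(\mathrm{AND})^{\downarrow}$, $(\mathrm{CT})^{\downarrow}$.
   Context: $Cn(\Gamma)=\{\psi\mid\Gamma\vdash\psi\}$, $Cn(\varphi,\psi)=Cn(\{\varphi,\psi\})$. Standing convention: the logic has terms $\wedge$ with $Cn(\varphi\wedge\psi)=Cn(\{\varphi,\psi\})$, $\vee$ with $Cn(\varphi\vee\psi)=Cn(\varphi)\cap Cn(\psi)$ (where rules use it), and $\top$ with $\top\in Cn(\varphi)$ for all $\varphi$. Rules on $R\subseteq\mathrm{Fm}\times\mathrm{Fm}$: $(\top)$: $(\top,\top)\in R$; (SI): $(\alpha,\varphi)\in R,\beta\vdash\alpha\Rightarrow(\beta,\varphi)\in R$; (WO): $(\alpha,\varphi)\in R,\varphi\vdash\psi\Rightarrow(\alpha,\psi)\in R$; (AND): $(\alpha,\varphi),(\alpha,\psi)\in R\Rightarrow(\alpha,\varphi\wedge\psi)\in R$; (OR): $(\alpha,\varphi),(\beta,\varphi)\in R\Rightarrow(\alpha\vee\beta,\varphi)\in R$; (CT): $(\alpha,\varphi),(\alpha\wedge\varphi,\psi)\in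 R\Rightarrow(\alpha,\psi)\in R$; $(\mathrm{AND})^{\downarrow}$: $(\alpha,\varphi)\in N,(\alpha,\psi)\in R\Rightarrow(\alpha,\varphi\wedge\psi)\in R$; $(\mathrm{OR})^{\downarrow}$: $(\alpha,\varphi)\in N,(\beta,\varphi)\in R\Rightarrow(\alpha\vee\beta,\varphi)\in R$; $(\mathrm{CT})^{\downarrow}$: $(\alpha,\varphi)\in N,(\alpha\wedge\varphi,\psi)\in R\Rightarrow(\alpha,\varphi\wedge\psi)\in R$. $N^i_{(\alpha,\varphi)}$ (resp. $N^i$) is the smallest extension of $N\cup\{(\alpha,\varphi)\}$ (resp. $N$) closed under the rule set $i=1$: $(\top)$,(SI),(WO),(AND); $i=2$: these plus (OR); $i=3$: $(\top)$,(SI),(WO),(AND),(CT). $S^i(P,N)=\bigcup\{N^i_{(\alpha,\varphi)}\mid(\alpha,\varphi)\in P\}$ if $P\neq\varnothing$ and $N^i$ otherwise. $P_N=\{(\alpha,\varphi)\mid\forall\psi((\alpha,\psi)\in N\Rightarrow Cn(\varphi,\psi)\neq\mathrm{Fm})\}$. *)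

theory Defs
  imports Main
begin

datatype 'c fm = Var nat | Op 'c "'c fm list"

fun subst :: "(nat \<Rightarrow> 'c fm) \<Rightarrow> 'c fm \<Rightarrow> 'c fm" where
  "subst \<sigma> (Var n) = \<sigma> n"
| "subst \<sigma> (Op c xs) = Op c (map (subst \<sigma>) xs)"

type_synonym 'c logic = "'c fm set \<Rightarrow> 'c fm \<Rightarrow> bool"

definition is_logic :: "'c logic \<Rightarrow> bool" where
  "is_logic D \<longleftrightarrow>
     (\<forall>\<Gamma> \<phi>. \<phi> \<in> \<Gamma> \<longrightarrow> D \<Gamma> \<phi>) \<and>
     (\<forall>\<Gamma> \<Delta> \<phi>. D \<Gamma> \<phi> \<and> \<Gamma> \<subseteq> \<Delta> \<longrightarrow> D \<Delta> \<phi>) \<and>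
     (\<forall>\<Gamma> \<Delta> \<phi>. (\<forall>\<psi>\<in>\<Delta>. D \<Gamma> \<psi>) \<and> D (\<Gamma> \<union> \<Delta>) \<phi> \<longrightarrow> D \<Gamma> \<phi>) \<and>
     (\<forall>\<Gamma> \<phi> \<sigma>. D \<Gamma> \<phi> \<longrightarrow> D (subst \<sigma> ` \<Gamma>) (subst \<sigma> \<phi>))"

definition Cn :: "'c logic \<Rightarrow> 'c fm set \<Rightarrow> 'c fm set" where
  "Cn D \<Gamma> = {\<psi>. D \<Gamma> \<psi>}"

definition interderivable :: "'c logic \<Rightarrow> 'c fm \<Rightarrow> 'c fm \<Rightarrow> bool" where
  "interderivable D \<phi> \<psi> \<longleftrightarrow> D {\<phi>} \<psi> \<and> D {\<psi>} \<phi>"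

definition selfextensional :: "'c logic \<Rightarrow> bool" where
  "selfextensional D \<longleftrightarrow>
     (\<forall>c xs ys. list_all2 (interderivable D) xs ys \<longrightarrow> interderivable D (Op c xs) (Op c ys))"

definition binary_term :: "('c fm \<Rightarrow> 'c fm \<Rightarrow> 'c fm) \<Rightarrow> bool" where
  "binary_term f \<longleftrightarrow> (\<exists>t. \<forall>\<phi> \<psi>. f \<phi> \<psi> = subst (\<lambda>n. if n = 0 then \<phi> else if n = 1 then \<psi> else Var n) t)"

type_synonym 'c rel = "('c fm \<times> 'c fm) set"

definition cl_top :: "'c fm \<Rightarrow> 'c rel \<Rightarrow> bool" where
  "cl_top tp R \<longleftrightarrow> (tp, tp) \<in> R"

definition cl_SI :: "'c logic \<Rightarrow> 'c rel \<Rightarrow> bool" where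
  "cl_SI D R \<longleftrightarrow> (\<forall>\<alpha> \<beta> \<phi>. (\<alpha>, \<phi>) \<in> R \<and> D {\<beta>} \<alpha> \<longrightarrow> (\<beta>, \<phi>) \<in> R)"

definition cl_WO :: "'c logic \<Rightarrow> 'c rel \<Rightarrow> bool" where
  "cl_WO D R \<longleftrightarrow> (\<forall>\<alpha> \<phi> \<psi>. (\<alpha>, \<phi>) \<in> R \<and> D {\<phi>} \<psi> \<longrightarrow> (\<alpha>, \<psi>) \<in> R)"

definition cl_AND :: "('c fm \<Rightarrow> 'c fm \<Rightarrow> 'c fm) \<Rightarrow> 'c rel \<Rightarrow> bool" where
  "cl_AND cj R \<longleftrightarrow> (\<forall>\<alpha> \<phi> \<psi>. (\<alpha>, \<phi>) \<in> R \<and> (\<alpha>, \<psi>) \<in> R \<longrightarrow> (\<alpha>, cj \<phi> \<psi>) \<in> R)"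

definition cl_OR :: "('c fm \<Rightarrow> 'c fm \<Rightarrow> 'c fm) \<Rightarrow> 'c rel \<Rightarrow> bool" where
  "cl_OR dj R \<longleftrightarrow> (\<forall>\<alpha> \<beta> \<phi>. (\<alpha>, \<phi>) \<in> R \<and> (\<beta>, \<phi>) \<in> R \<longrightarrow> (dj \<alpha> \<beta>, \<phi>) \<in> R)"

definition cl_CT :: "('c fm \<Rightarrow> 'c fm \<Rightarrow> 'c fm) \<Rightarrow> 'c rel \<Rightarrow> bool" where
  "cl_CT cj R \<longleftrightarrow> (\<forall>\<alpha> \<phi> \<psi>. (\<alpha>, \<phi>) \<in> R \<and> (cj \<alpha> \<phi>, \<psi>) \<in> R \<longrightarrow> (\<alpha>, \<psi>) \<in> R)"

definition cl_AND_down :: "('c fm \<Rightarrow> 'c fm \<Rightarrow> 'c fm) \<Rightarrow> 'c rel \<Rightarrow> 'c rel \<Rightarrow> bool" where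
  "cl_AND_down cj N R \<longleftrightarrow> (\<forall>\<alpha> \<phi> \<psi>. (\<alpha>, \<phi>) \<in> N \<and> (\<alpha>, \<psi>) \<in> R \<longrightarrow> (\<alpha>, cj \<phi> \<psi>) \<in> R)"

definition cl_OR_down :: "('c fm \<Rightarrow> 'c fm \<Rightarrow> 'c fm) \<Rightarrow> 'c rel \<Rightarrow> 'c rel \<Rightarrow> bool" where
  "cl_OR_down dj N R \<longleftrightarrow> (\<forall>\<alpha> \<beta> \<phi>. (\<alpha>, \<phi>) \<in> N \<and> (\<beta>, \<phi>) \<in> R \<longrightarrow> (dj \<alpha> \<beta>, \<phi>) \<in> R)"

definition cl_CT_down :: "('c fm \<Rightarrow> 'c fm \<Rightarrow> 'c fm) \<Rightarrow> 'c rel \<Rightarrow> 'c rel \<Rightarrow> bool" where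
  "cl_CT_down cj N R \<longleftrightarrow> (\<forall>\<alpha> \<phi> \<psi>. (\<alpha>, \<phi>) \<in> N \<and> (cj \<alpha> \<phi>, \<psi>) \<in> R \<longrightarrow> (\<alpha>, cj \<phi> \<psi>) \<in> R)"

definition closed_i :: "'c logic \<Rightarrow> ('c fm \<Rightarrow> 'c fm \<Rightarrow> 'c fm) \<Rightarrow> ('c fm \<Rightarrow> 'c fm \<Rightarrow> 'c fm)
    \<Rightarrow> 'c fm \<Rightarrow> nat \<Rightarrow> 'c rel \<Rightarrow> bool" where
  "closed_i D cj dj tp i R \<longleftrightarrow> cl_top tp R \<and> cl_SI D R \<and> cl_WO D R \<and> cl_AND cj R
     \<and> (i = 2 \<longrightarrow> cl_OR dj R) \<and> (i = 3 \<longrightarrow> cl_CT cj R)"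

definition closure_i :: "'c logic \<Rightarrow> ('c fm \<Rightarrow> 'c fm \<Rightarrow> 'c fm) \<Rightarrow> ('c fm \<Rightarrow> 'c fm \<Rightarrow> 'c fm)
    \<Rightarrow> 'c fm \<Rightarrow> nat \<Rightarrow> 'c rel \<Rightarrow> 'c rel" where
  "closure_i D cj dj tp i X = \<Inter>{R. X \<subseteq> R \<and> closed_i D cj dj tp i R}"

definition S_i :: "'c logic \<Rightarrow> ('c fm \<Rightarrow> 'c fm \<Rightarrow> 'c fm) \<Rightarrow> ('c fm \<Rightarrow> 'c fm \<Rightarrow> 'c fm)
    \<Rightarrow> 'c fm \<Rightarrow> nat \<Rightarrow> 'c rel \<Rightarrow> 'c rel \<Rightarrow> 'c rel" where
  "S_i D cj dj tp i P N =
     (if P \<noteq> {} then \<Union>{closure_i D cj dj tp i (N \<union> {p}) | p. p \<in> P}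
      else closure_i D cj dj tp i N)"

definition P_of :: "'c logic \<Rightarrow> 'c rel \<Rightarrow> 'c rel" where
  "P_of D N = {(\<alpha>, \<phi>). \<forall>\<psi>. (\<alpha>, \<psi>) \<in> N \<longrightarrow> Cn D {\<phi>, \<psi>} \<noteq> UNIV}"

end

theory Submission
  imports Defs
begin

text \<open>Every member of the union defining \<open>S\<^sup>i(P,N)\<close> contains \<open>N\<close> and is closed under
  the unrestricted rules. A restricted rule takes one premise from \<open>N\<close> and only the other
  from \<open>S\<^sup>i(P,N)\<close>, so both premises lie in a single member, where the unrestricted rules
  apply; for \<open>(CT)\<^sup>\<down>\<close>, (CT) yields \<open>(\<alpha>, \<psi>)\<close> and (AND) then yields \<open>(\<alpha>, cj \<phi> \<psi>)\<close>.\<close>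

lemma closed_i_Inter:
  assumes "\<And>R. R \<in> F \<Longrightarrow> closed_i D cj dj tp i R"
  shows "closed_i D cj dj tp i (\<Inter>F)"
proof -
  have "cl_top tp (\<Inter>F)" "cl_SI D (\<Inter>F)" "cl_WO D (\<Inter>F)" "cl_AND cj (\<Inter>F)"
    using assms unfolding closed_i_def cl_top_def cl_SI_def cl_WO_def cl_AND_def by blast+
  moreover have "i = 2 \<Longrightarrow> cl_OR dj (\<Inter>F)" "i = 3 \<Longrightarrow> cl_CT cj (\<Inter>F)"
    using assms unfolding closed_i_def cl_OR_def cl_CT_def by blast+
  ultimately show ?thesis unfolding closed_i_def by blast
qed

lemma closure_i_closed: "closed_i D cj dj tp i (closure_i D cj dj tp i X)"
  unfolding closure_i_def by (rule closed_i_Inter) simp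

lemma closure_i_superset: "X \<subseteq> closure_i D cj dj tp i X"
  unfolding closure_i_def by blast

lemma S_i_Union_of_closed:
  obtains \<C> where "S_i D cj dj tp i P N = \<Union>\<C>" "\<C> \<noteq> {}"
    "\<And>C. C \<in> \<C> \<Longrightarrow> closed_i D cj dj tp i C \<and> N \<subseteq> C"
proof (cases "P = {}")
  case True
  then have "S_i D cj dj tp i P N = \<Union>{closure_i D cj dj tp i N}"
    by (simp add: S_i_def)
  then show ?thesis
    by (rule that) (auto simp: closure_i_closed closure_i_superset)
next
  case False
  then have "S_i D cj dj tp i P N = \<Union>{closure_i D cj dj tp i (N \<union> {p}) | p. p \<in> P}"
    by (simp add: S_i_def)
  then show ?thesis
    by (rule that) (use False in \<open>auto simp: closure_i_closed intro: closure_i_superset[THEN subsetD]\<close>)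
qed

lemma cl_top_Union: "C \<in> \<C> \<Longrightarrow> cl_top tp C \<Longrightarrow> cl_top tp (\<Union>\<C>)"
  unfolding cl_top_def by blast

lemma cl_SI_Union: "(\<And>C. C \<in> \<C> \<Longrightarrow> cl_SI D C) \<Longrightarrow> cl_SI D (\<Union>\<C>)"
  unfolding cl_SI_def by blast

lemma cl_WO_Union: "(\<And>C. C \<in> \<C> \<Longrightarrow> cl_WO D C) \<Longrightarrow> cl_WO D (\<Union>\<C>)"
  unfolding cl_WO_def by blast

lemma cl_AND_down_Union:
  "(\<And>C. C \<in> \<C> \<Longrightarrow> cl_AND cj C \<and> N \<subseteq> C) \<Longrightarrow> cl_AND_down cj N (\<Union>\<C>)"
  unfolding cl_AND_def cl_AND_down_def by blast

lemma cl_OR_down_Union: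
  "(\<And>C. C \<in> \<C> \<Longrightarrow> cl_OR dj C \<and> N \<subseteq> C) \<Longrightarrow> cl_OR_down dj N (\<Union>\<C>)"
  unfolding cl_OR_def cl_OR_down_def by blast

lemma cl_CT_down_Union:
  "(\<And>C. C \<in> \<C> \<Longrightarrow> cl_CT cj C \<and> cl_AND cj C \<and> N \<subseteq> C) \<Longrightarrow> cl_CT_down cj N (\<Union>\<C>)"
  unfolding cl_CT_def cl_AND_def cl_CT_down_def by blast

lemma S_i_closed_down:
  "let S = S_i D cj dj tp i P N in cl_top tp S \<and> cl_SI D S \<and> cl_WO D S \<and> cl_AND_down cj N S
    \<and> (i = 2 \<longrightarrow> cl_OR_down dj N S) \<and> (i = 3 \<longrightarrow> cl_CT_down cj N S)"
proof -
  obtain \<C> where S: "S_i D cj dj tp i P N = \<Union>\<C>" and "\<C> \<noteq> {}"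
    and closed: "\<And>C. C \<in> \<C> \<Longrightarrow> closed_i D cj dj tp i C \<and> N \<subseteq> C"
    using S_i_Union_of_closed by metis
  then obtain C where "C \<in> \<C>" by blast
  with closed have "cl_top tp (\<Union>\<C>)"
    unfolding closed_i_def by (blast intro: cl_top_Union)
  moreover have "cl_SI D (\<Union>\<C>)" "cl_WO D (\<Union>\<C>)" "cl_AND_down cj N (\<Union>\<C>)"
    using closed unfolding closed_i_def
    by (blast intro: cl_SI_Union cl_WO_Union cl_AND_down_Union)+
  moreover have "i = 2 \<Longrightarrow> cl_OR_down dj N (\<Union>\<C>)" "i = 3 \<Longrightarrow> cl_CT_down cj N (\<Union>\<C>)"
    using closed unfolding closed_i_def
    by (blast intro: cl_OR_down_Union cl_CT_down_Union)+
  ultimately show ?thesis unfolding S Let_def by blast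
qed

theorem corollary4p14:
  fixes D :: "'c logic"
    and cj dj :: "'c fm \<Rightarrow> 'c fm \<Rightarrow> 'c fm"
    and tp :: "'c fm"
    and N P :: "'c rel"
  assumes logic: "is_logic D"
    and selfext: "selfextensional D"
    and cj_term: "binary_term cj"
    and cj_Cn: "\<forall>\<phi> \<psi>. Cn D {cj \<phi> \<psi>} = Cn D {\<phi>, \<psi>}"
    and tp_Cn: "\<forall>\<phi>. tp \<in> Cn D {\<phi>}"
    and P_sub: "P \<subseteq> P_of D N"
  shows "(let S = S_i D cj dj tp 1 P N in
            cl_top tp S \<and> cl_SI D S \<and> cl_WO D S \<and> cl_AND_down cj N S)
       \<and> ((binary_term dj \<and> (\<forall>\<phi> \<psi>. Cn D {dj \<phi> \<psi>} = Cn D {\<phi>} \<inter> Cn D {\<psi>})) \<longrightarrow>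
          (let S = S_i D cj dj tp 2 P N in
            cl_top tp S \<and> cl_SI D S \<and> cl_WO D S \<and> cl_AND_down cj N S \<and> cl_OR_down dj N S))
       \<and> (let S = S_i D cj dj tp 3 P N in
            cl_top tp S \<and> cl_SI D S \<and> cl_WO D S \<and> cl_AND_down cj N S \<and> cl_CT_down cj N S)"
  using S_i_closed_down[of D cj dj tp 1 P N] S_i_closed_down[of D cj dj tp 2 P N]
    S_i_closed_down[of D cj dj tp 3 P N]
  by (simp add: Let_def)

end
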